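(* For every integer $n\ge0$, with the notation of the context, the matrix $\mathrm{ch}^{(n)}_\Gamma$ satisfies $$\left(\tfrac{1}{(2\pi)^{n/2}}\mathrm{ch}^{(n)}_\Gamma\right)^{-1}\mathbf{e}\!\left[\widetilde Q^{(n)}\right]\left(\tfrac{1}{(2\pi)^{n/2}}\mathrm{ch}^{(n)}_\Gamma\right)=\mathbf{S}^{(n)},$$ $$\left(\tfrac{1}{(2\pi)^{n/2}}\mathrm{ch}^{(n)}_\Gamma\right)^{T}\mathbf{e}\!\left[\tfrac12\widetilde Q^{(n)}\right]\eta^{(n)}\left(\tfrac{1}{(2\pi)^{n/2}}\mathrm{ch}^{(n)}_\Gamma\right)=\chi^{(n)},$$ where $\mathbf{S}^{(n)}:=(\chi^{(n)})^{-1}(\chi^{(n)})^T$.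
   Context: Fix integers $a_1,a_2,\ldots\ge2$; $d_0=1$, $d_i=a_1\cdots a_i$; $\widetilde\mu_n=\sum_{i=0}^n(-1)^{n-i}d_i$; $\mathbf{e}[\alpha]=\exp(2\pi\sqrt{-1}\alpha)$, applied entrywise to diagonal matrices. Index sets: $I_0=\{1\}$; $I'_n=\{\kappa\in\{1,\dots,d_n\}\mid a_n\nmid\kappa\}$ ($n\ge1$); $I_1=I'_1$; $I_n=I'_n\sqcup I_{n-2}$ (formal disjoint union, $|I_n|=\widetilde\mu_n$) for $n\ge2$; matrices indexed by $I_n$ are written in block form with respect to $I'_n$ then $I_{n-2}$ (recursively). For $\kappa\in I'_n$, $\omega^{(n)}_{\kappa,i}:=(-1)^{i-1}\frac{d_{i-1}}{d_n}\kappa-\lfloor(-1)^{i-1}\frac{d_{i-1}}{d_n}\kappa\rfloor$. $\eta^{(n)}$ ($I_n\times I_n$): $\eta^{(0)}=(1)$, $\eta^{(1)}=(\frac{1}{a_1}\delta_{\kappa+\lambda,a_1})$, and for $n\ge2$, $\eta^{(n)}=\mathrm{diag}\big((\frac{1}{d_n}\delta_{\kappa+\lambda,d_n})_{\kappa,\lambda\in I'_n},\,-\frac{1}{a_n}\eta^{(n-2)}\big)$. $\widetilde Q^{(n)}$ (diagonal, $I_n\times I_n$): $\widetilde Q^{(0)}=(0)$; $\widetilde Q^{(1)}=\mathrm{diag}(\omega^{(1)}_{\kappa,1}-\frac12)_{\kappa\in I_1}$; for $n\ge2$, $\widetilde Q^{(n)}=\mathrm{diag}\big(\mathrm{diag}(\sum_{l=1}^n(\omega^{(n)}_{\kappa,l}-\frac12))_{\kappa\in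 I'_n},\,\widetilde Q^{(n-2)}\big)$. For $\kappa\in I'_n$: if $n=2m-1$, $c^{(n)}_\kappa=\prod_{l=1}^n\Gamma(1-\omega^{(n)}_{\kappa,l})\prod_{i=1}^m(1-\mathbf{e}[\omega^{(n)}_{\kappa,2i-1}])$; if $n=2m$, $c^{(n)}_\kappa=\prod_{l=1}^n\Gamma(1-\omega^{(n)}_{\kappa,l})\prod_{i=1}^m(1-\mathbf{e}[\omega^{(n)}_{\kappa,2i}])$. For $j\in\mathbb{Z}$, vectors $\mathrm{ch}^{(n)}_{\Gamma,j}\in\mathbb{C}^{I_n}$: $\mathrm{ch}^{(0)}_{\Gamma,j}=(1)$; $(\mathrm{ch}^{(1)}_{\Gamma,j})_\kappa=c^{(1)}_\kappa\mathbf{e}[\omega^{(1)}_{\kappa,1}(j-1)]$; for $n\ge2$, $(\mathrm{ch}^{(n)}_{\Gamma,j})_\kappa=c^{(n)}_\kappa\mathbf{e}[(-1)^{n-1}\omega^{(n)}_{\kappa,1}(j-1)]$ if $\kappa\in I'_n$ and $=2\pi\sqrt{-1}\,(\mathrm{ch}^{(n-2)}_{\Gamma,j})_\kappa$ if $\kappa\in I_{n-2}$. The $\widetilde\mu_n\times\widetilde\mu_n$ matrix $\mathrm{ch}^{(n)}_\Gamma:=(\mathrm{ch}^{(n)}_{\Gamma,1},\dots,\mathrm{ch}^{(n)}_{\Gamma,\widetilde\mu_n})$ (rows indexed by $I_n$, columns by $j=1,\dots,\widetilde\mu_n$). $\chi^{(n)}$ ($\widetilde\mu_n\times\widetilde\mu_n$):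 $\chi^{(n)}=1/\varphi_n(N)$ where $N=(\delta_{i+1,j})$ is the nilpotent shift matrix, $\varphi_n(t)=\prod_{i=0}^n(1-t^{d_i})^{(-1)^{n-i}}$ for $n\ge1$, $\varphi_0(t)=1-t$ (i.e. expand $1/\varphi_n(t)$ as a power series in $t$ and substitute $N$). $\chi^{(n)}$ is the Euler form matrix of a full exceptional collection in the category of $L_{f_n}$-graded matrix factorizations of $f_n=z_1^{a_1}z_2+\cdots+z_n^{a_n}$, and $\mathbf{S}^{(n)}$ is the matrix of the Serre functor on its Grothendieck group. *)

theory Defs
  imports "HOL-Analysis.Analysis" "HOL-Computational_Algebra.Formal_Power_Series"
    "Jordan_Normal_Form.Matrix"
begin

text \<open>The sequence a_1, a_2, ... is given as a function a :: nat => nat (a 0 unused).\<close>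

definition dd :: "(nat \<Rightarrow> nat) \<Rightarrow> nat \<Rightarrow> nat" where
  "dd a i = (\<Prod>k\<in>{1..i}. a k)"

definition mutilde :: "(nat \<Rightarrow> nat) \<Rightarrow> nat \<Rightarrow> int" where
  "mutilde a n = (\<Sum>i\<in>{0..n}. (-1) ^ (n - i) * int (dd a i))"

definition ee :: "real \<Rightarrow> complex" where
  "ee x = exp (2 * complex_of_real pi * \<i> * complex_of_real x)"

text \<open>Index set I_n as an ordered list of labelled elements (level, kappa):
  first I'_n (label n, kappa increasing), then I_{n-2} recursively.\<close>

definition Iprime :: "(nat \<Rightarrow> nat) \<Rightarrow> nat \<Rightarrow> (nat \<times> nat) list" where
  "Iprime a n = map (\<lambda>k. (n, k)) (filter (\<lambda>k. \<not> a n dvd k) [1..<dd a n + 1])"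

fun Iset :: "(nat \<Rightarrow> nat) \<Rightarrow> nat \<Rightarrow> (nat \<times> nat) list" where
  "Iset a 0 = [(0, 1)]"
| "Iset a (Suc 0) = Iprime a 1"
| "Iset a (Suc (Suc k)) = Iprime a (Suc (Suc k)) @ Iset a k"

definition omega :: "(nat \<Rightarrow> nat) \<Rightarrow> nat \<Rightarrow> nat \<Rightarrow> nat \<Rightarrow> real" where
  "omega a n k i =
    (let x = (-1) ^ (i - 1) * real (dd a (i - 1)) / real (dd a n) * real k
     in x - of_int \<lfloor>x\<rfloor>)"

fun eta :: "(nat \<Rightarrow> nat) \<Rightarrow> nat \<Rightarrow> nat \<times> nat \<Rightarrow> nat \<times> nat \<Rightarrow> complex" where
  "eta a 0 _ _ = 1"
| "eta a (Suc 0) (_, k) (_, l) = (if k + l = a 1 then 1 / of_nat (a 1) else 0)"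
| "eta a (Suc (Suc m)) (p, k) (q, l) =
    (if p = Suc (Suc m) \<and> q = Suc (Suc m) then
       (if k + l = dd a (Suc (Suc m)) then 1 / of_nat (dd a (Suc (Suc m))) else 0)
     else if p = Suc (Suc m) \<or> q = Suc (Suc m) then 0
     else - (1 / of_nat (a (Suc (Suc m)))) * eta a m (p, k) (q, l))"

fun Qt :: "(nat \<Rightarrow> nat) \<Rightarrow> nat \<Rightarrow> nat \<times> nat \<Rightarrow> real" where
  "Qt a 0 _ = 0"
| "Qt a (Suc 0) (_, k) = omega a 1 k 1 - 1/2"
| "Qt a (Suc (Suc m)) (p, k) =
    (if p = Suc (Suc m) then (\<Sum>l\<in>{1..Suc (Suc m)}. omega a (Suc (Suc m)) k l - 1/2)
     else Qt a m (p, k))"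

definition cc :: "(nat \<Rightarrow> nat) \<Rightarrow> nat \<Rightarrow> nat \<Rightarrow> complex" where
  "cc a n k =
    (\<Prod>l\<in>{1..n}. Gamma (complex_of_real (1 - omega a n k l))) *
    (if odd n then (\<Prod>i\<in>{1..(n + 1) div 2}. 1 - ee (omega a n k (2 * i - 1)))
     else (\<Prod>i\<in>{1..n div 2}. 1 - ee (omega a n k (2 * i))))"

fun chG :: "(nat \<Rightarrow> nat) \<Rightarrow> nat \<Rightarrow> nat \<times> nat \<Rightarrow> int \<Rightarrow> complex" where
  "chG a 0 _ _ = 1"
| "chG a (Suc 0) (_, k) j = cc a 1 k * ee (omega a 1 k 1 * of_int (j - 1))"
| "chG a (Suc (Suc m)) (p, k) j =
    (if p = Suc (Suc m) then
       cc a (Suc (Suc m)) k *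
         ee ((-1) ^ (Suc m) * omega a (Suc (Suc m)) k 1 * of_int (j - 1))
     else 2 * complex_of_real pi * \<i> * chG a m (p, k) j)"

text \<open>Matrices (Jordan_Normal_Form); rows indexed by the list Iset a n,
  columns j = 1..mutilde (column index c corresponds to j = c + 1).\<close>

definition chMat :: "(nat \<Rightarrow> nat) \<Rightarrow> nat \<Rightarrow> complex mat" where
  "chMat a n = mat (length (Iset a n)) (nat (mutilde a n))
     (\<lambda>(r, c). chG a n (Iset a n ! r) (int c + 1))"

definition QtMat :: "(nat \<Rightarrow> nat) \<Rightarrow> nat \<Rightarrow> real \<Rightarrow> complex mat" where
  "QtMat a n s = mat (length (Iset a n)) (length (Iset a n))
     (\<lambda>(r, c). if r = c then ee (s * Qt a n (Iset a n ! r)) else 0)"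

definition etaMat :: "(nat \<Rightarrow> nat) \<Rightarrow> nat \<Rightarrow> complex mat" where
  "etaMat a n = mat (length (Iset a n)) (length (Iset a n))
     (\<lambda>(r, c). eta a n (Iset a n ! r) (Iset a n ! c))"

definition phi :: "(nat \<Rightarrow> nat) \<Rightarrow> nat \<Rightarrow> complex fps" where
  "phi a n = (if n = 0 then 1 - fps_X else
     (\<Prod>i\<in>{0..n}. if even (n - i) then 1 - fps_X ^ dd a i
                   else inverse (1 - fps_X ^ dd a i)))"

text \<open>chi^(n) = 1/phi_n(N) with N the nilpotent shift (delta_{i+1,j}); N^k = (delta_{i+k,j}).\<close>
definition chiMat :: "(nat \<Rightarrow> nat) \<Rightarrow> nat \<Rightarrow> complex mat" where
  "chiMat a n = mat (nat (mutilde a n)) (nat (mutilde a n))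
     (\<lambda>(i, j). if i \<le> j then fps_nth (inverse (phi a n)) (j - i) else 0)"

definition mat_inv :: "complex mat \<Rightarrow> complex mat" where
  "mat_inv A = (THE B. B \<in> carrier_mat (dim_row A) (dim_row A) \<and>
                        B * A = 1\<^sub>m (dim_row A) \<and> A * B = 1\<^sub>m (dim_row A))"

definition SerreMat :: "(nat \<Rightarrow> nat) \<Rightarrow> nat \<Rightarrow> complex mat" where
  "SerreMat a n = mat_inv (chiMat a n) * transpose_mat (chiMat a n)"

end

theory Submission
  imports Defs "Jordan_Normal_Form.Determinant" "HOL-Computational_Algebra.Polynomial_FPS"
begin

(*
  Everything reduces to the bilinear form B(i,j) = sum_{p,q in I_n} ch_{p,i} e[Q_p/2] eta_{pq} ch_{q,j},
  the (i,j) entry of ch^T e[Q/2] eta ch.  On the block I'_n, eta pairs kappa with d_n - kappa, and the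
  reflection formula Gamma(x) Gamma(1-x) = pi / sin(pi x) collapses ch_{kappa,i} e[Q_kappa/2] ch_{d_n-kappa,j}
  to (2 pi)^n F_n(z^kappa) z^(kappa (i-j)), where z = e[(-1)^(n-1)/d_n] and F_n = (1 - t^d_n) / phi_n(t)
  is a polynomial.  Summing over all kappa in 1..d_n by orthogonality of the characters of Z/d_n picks
  out the coefficients of F_n in the residue class of j - i mod d_n.  The multiples kappa = a_n k of a_n,
  which are not in I'_n, must be subtracted: there z^kappa is a d_(n-1)-th root of unity, and the factor
  F_n / F_(n-2) = 1 + t^d_(n-2) + ... + t^((a_(n-1) - 1) d_(n-2)) equals a_(n-1) on d_(n-2)-th roots of
  unity and vanishes on the others, so the subtracted sum is exactly cancelled by the contribution of the
  block I_(n-2).  By induction B(i,j) = (2 pi)^n [t^(j-i)] F_n = (2 pi)^n chi_(ij), using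
  deg F_n + mu_n <= d_n.  The Serre relation is then formal: eta is symmetric and eta_pq <> 0 only if
  Q_p + Q_q = 0, so e[Q/2] eta e[Q] = eta e[Q/2], whence chi (C^-1 e[Q] C) = C^T eta e[Q/2] C = chi^T.
*)

lemma nat_induct_Suc_Suc [case_names 0 1 Suc_Suc]:
  "P 0 \<Longrightarrow> P (Suc 0) \<Longrightarrow> (\<And>m. P m \<Longrightarrow> P (Suc (Suc m))) \<Longrightarrow> P n"
  by (induction n rule: nat_induct2) simp_all

lemma dd_0 [simp]: "dd a 0 = 1"
  by (simp add: dd_def)

lemma dd_Suc: "dd a (Suc i) = dd a i * a (Suc i)"
  by (simp add: dd_def prod.nat_ivl_Suc' mult.commute)

lemma dd_split: "i \<le> j \<Longrightarrow> dd a j = dd a i * (\<Prod>k\<in>{i<..j}. a k)"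
  unfolding dd_def by (subst prod.union_disjoint[symmetric]) (auto intro!: prod.cong)

lemma mutilde_0 [simp]: "mutilde a 0 = 1"
  by (simp add: mutilde_def)

lemma mutilde_1: "mutilde a (Suc 0) = int (a 1) - 1"
  by (simp add: mutilde_def dd_def)

lemma mutilde_Suc_Suc:
  "mutilde a (Suc (Suc m)) = int (dd a (Suc (Suc m))) - int (dd a (Suc m)) + mutilde a m"
proof -
  have "{0..Suc (Suc m)} = insert (Suc (Suc m)) (insert (Suc m) {0..m})" by auto
  then show ?thesis
    unfolding mutilde_def by (simp add: Suc_diff_le)
qed

locale positive_sequence =
  fixes a :: "nat \<Rightarrow> nat"
  assumes a_pos: "\<And>i. 1 \<le> i \<Longrightarrow> 0 < a i"
begin

lemma dd_pos: "0 < dd a i"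
  unfolding dd_def using a_pos by (simp add: prod_pos)

end

section \<open>Roots of unity\<close>

lemma ee_add: "ee (x + y) = ee x * ee y"
  by (simp add: ee_def distrib_left exp_add)

lemma ee_eq_1_iff: "ee x = 1 \<longleftrightarrow> x \<in> \<int>"
proof -
  have "ee x = 1 \<longleftrightarrow> (\<exists>n::int. x = of_int n)"
    unfolding ee_def exp_eq_1 by auto
  then show ?thesis by (auto elim: Ints_cases)
qed

lemma ee_Ints [simp]: "x \<in> \<int> \<Longrightarrow> ee x = 1"
  by (simp add: ee_eq_1_iff)

lemma ee_add_Ints: "y \<in> \<int> \<Longrightarrow> ee (x + y) = ee x"
  by (simp add: ee_add)

lemma ee_power: "ee x ^ m = ee (of_nat m * x)"
  by (induction m) (auto simp: ee_add distrib_right)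

lemma ee_sum: "ee (\<Sum>l\<in>S. f l) = (\<Prod>l\<in>S. ee (f l))"
  by (induction S rule: infinite_finite_induct) (auto simp: ee_add)

lemma ee_one_minus: "ee (1 - x) = ee (- x)"
  using ee_add_Ints[of 1 "- x"] by simp

lemma ee_div_eq_1_iff: "N \<noteq> 0 \<Longrightarrow> ee (of_int m / of_int N) = 1 \<longleftrightarrow> N dvd m"
  by (simp add: ee_eq_1_iff of_int_div_of_int_in_Ints_iff)

lemma sum_ee_roots_of_unity:
  assumes "N > 0"
  shows "(\<Sum>\<kappa>\<in>{1..N}. ee (of_int m * real \<kappa> / real N)) = (if int N dvd m then of_nat N else 0)"
proof -
  define z where "z = ee (of_int m / real N)"
  have z_pow: "ee (of_int m * real \<kappa> / real N) = z ^ \<kappa>" for \<kappa>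
    by (simp add: z_def ee_power field_simps)
  have "z ^ N = 1"
    using assms by (simp add: z_def ee_power)
  have "(\<Sum>\<kappa>\<in>{1..N}. z ^ \<kappa>) = (\<Sum>\<kappa><N. z ^ \<kappa>)"
  proof -
    have "(\<Sum>\<kappa>\<in>{1..N}. z ^ \<kappa>) = (\<Sum>\<kappa>\<in>{1..<N}. z ^ \<kappa>) + z ^ N"
      using assms by (simp add: sum.last_plus)
    also have "\<dots> = (\<Sum>\<kappa><N. z ^ \<kappa>)"
      using \<open>z ^ N = 1\<close> assms by (simp add: sum.atLeast1_atMost_eq lessThan_atLeast0 sum.atLeast_Suc_lessThan add.commute)
    finally show ?thesis .
  qed
  also have "\<dots> = (if z = 1 then of_nat N else 0)"
    using one_diff_power_eq[of z N] \<open>z ^ N = 1\<close> by auto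
  also have "z = 1 \<longleftrightarrow> int N dvd m"
    using ee_div_eq_1_iff[of "int N" m] assms by (simp add: z_def)
  finally show ?thesis by (simp add: z_pow)
qed

section \<open>The polynomial \<open>F\<^sub>n = (1 - t\<^bsup>d\<^sub>n\<^esup>) / \<phi>\<^sub>n(t)\<close>\<close>

definition geom_poly :: "(nat \<Rightarrow> nat) \<Rightarrow> nat \<Rightarrow> complex poly" where
  "geom_poly a m = (\<Sum>r<a (Suc m). monom 1 (r * dd a m))"

fun chi_poly :: "(nat \<Rightarrow> nat) \<Rightarrow> nat \<Rightarrow> complex poly" where
  "chi_poly a 0 = 1"
| "chi_poly a (Suc 0) = [:1, -1:]"
| "chi_poly a (Suc (Suc m)) = geom_poly a m * chi_poly a m"

lemma poly_geom_poly: "poly (geom_poly a m) w = (\<Sum>r<a (Suc m). (w ^ dd a m) ^ r)"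
  by (simp add: geom_poly_def poly_sum poly_monom mult.commute flip: power_mult)

lemma poly_geom_poly_mult: "(1 - w ^ dd a m) * poly (geom_poly a m) w = 1 - w ^ dd a (Suc m)"
  by (simp add: poly_geom_poly one_diff_power_eq dd_Suc power_mult)

lemma geom_poly_mult: "(1 - monom 1 (dd a m)) * geom_poly a m = 1 - monom 1 (dd a (Suc m))"
  by (rule poly_eq_poly_eq_iff[THEN iffD1]) (auto simp: poly_geom_poly_mult poly_monom)

lemma poly_geom_poly_root:
  assumes "w ^ dd a (Suc m) = 1"
  shows "poly (geom_poly a m) w = (if w ^ dd a m = 1 then of_nat (a (Suc m)) else 0)"
  using poly_geom_poly_mult[of w a m] assms by (auto simp: poly_geom_poly)

lemma poly_chi_poly:
  assumes "\<And>l. l \<in> {1..n} \<Longrightarrow> w ^ dd a (l - 1) \<noteq> 1"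
  shows "poly (chi_poly a n) w =
    (\<Prod>l\<in>{1..n}. if even (n - l) then 1 - w ^ dd a (l - 1) else inverse (1 - w ^ dd a (l - 1)))"
  using assms
proof (induction n rule: nat_induct_Suc_Suc)
  case (Suc_Suc m)
  have "w ^ dd a m \<noteq> 1"
    using Suc_Suc.prems[of "Suc m"] by simp
  then have "poly (geom_poly a m) w = (1 - w ^ dd a (Suc m)) * inverse (1 - w ^ dd a m)"
    using poly_geom_poly_mult[of w a m] by (simp add: field_simps)
  moreover have "{1..Suc (Suc m)} = insert (Suc (Suc m)) (insert (Suc m) {1..m})"
    by auto
  ultimately show ?case
    using Suc_Suc by (simp add: Suc_diff_le)
qed simp_all

lemma phi_Suc_Suc:
  "phi a (Suc (Suc m)) =
     (1 - fps_X ^ dd a (Suc (Suc m))) * inverse (1 - fps_X ^ dd a (Suc m)) * phi a m"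
proof -
  have "{0..Suc (Suc m)} = insert (Suc (Suc m)) (insert (Suc m) {0..m})"
    by auto
  then show ?thesis
    by (cases "m = 0") (simp_all add: phi_def Suc_diff_le mult.assoc)
qed

context positive_sequence
begin

lemma chi_poly_times_phi: "fps_of_poly (chi_poly a n) * phi a n = 1 - fps_X ^ dd a n"
proof (induction n rule: nat_induct_Suc_Suc)
  case 0
  then show ?case by (simp add: phi_def)
next
  case 1
  have "{0..Suc 0} = {0, 1}" by auto
  moreover have "fps_of_poly [:1, -1:] = (1 - fps_X :: complex fps)"
    by (simp add: fps_of_poly_pCons fps_eq_iff fps_X_def)
  ultimately have "fps_of_poly (chi_poly a 1) * phi a 1
      = inverse (1 - fps_X) * (1 - fps_X) * (1 - fps_X ^ dd a 1)"
    by (simp add: phi_def mult_ac)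
  then show ?case
    by (simp add: inverse_mult_eq_1)
next
  case (Suc_Suc m)
  have geom: "fps_of_poly (geom_poly a m) * (1 - fps_X ^ dd a m) = 1 - fps_X ^ dd a (Suc m)"
    using arg_cong[OF geom_poly_mult[of a m], of fps_of_poly]
    by (simp add: fps_of_poly_mult fps_of_poly_monom' fps_of_poly_diff mult.commute)
  have inv: "inverse (1 - fps_X ^ dd a (Suc m)) * (1 - fps_X ^ dd a (Suc m)) = (1 :: complex fps)"
    using dd_pos[of "Suc m"] by (intro inverse_mult_eq_1) simp
  have "fps_of_poly (chi_poly a (Suc (Suc m))) * phi a (Suc (Suc m))
      = (1 - fps_X ^ dd a (Suc (Suc m))) * inverse (1 - fps_X ^ dd a (Suc m))
        * (fps_of_poly (geom_poly a m) * (fps_of_poly (chi_poly a m) * phi a m))"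
    by (simp add: phi_Suc_Suc fps_of_poly_mult mult_ac)
  also have "\<dots> = (1 - fps_X ^ dd a (Suc (Suc m)))
        * (inverse (1 - fps_X ^ dd a (Suc m)) * (1 - fps_X ^ dd a (Suc m)))"
    unfolding Suc_Suc.IH geom by (simp add: mult_ac)
  finally show ?case
    unfolding inv by simp
qed

lemma coeff_inverse_phi:
  assumes "k < dd a n"
  shows "fps_nth (inverse (phi a n)) k = coeff (chi_poly a n) k"
proof -
  define J where "J = inverse (1 - fps_X ^ dd a n :: complex fps)"
  have J: "J * (1 - fps_X ^ dd a n) = 1"
    unfolding J_def using dd_pos[of n] by (intro inverse_mult_eq_1) simp
  have "inverse (phi a n) = fps_of_poly (chi_poly a n) * J"
    by (rule fps_inverse_unique) (metis J chi_poly_times_phi mult.commute mult.left_commute)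
  also have "\<dots> = fps_of_poly (chi_poly a n) + fps_X ^ dd a n * (fps_of_poly (chi_poly a n) * J)"
  proof -
    have "J = 1 + fps_X ^ dd a n * J"
      using J by (simp add: algebra_simps)
    then show ?thesis
      by (metis distrib_left mult.left_commute mult.right_neutral)
  qed
  finally show ?thesis
    using assms by (simp add: fps_X_power_mult_nth)
qed

lemma degree_chi_poly: "int (degree (chi_poly a n)) + mutilde a n \<le> int (dd a n)"
proof (induction n rule: nat_induct_Suc_Suc)
  case 1
  then show ?case by (simp add: mutilde_1 dd_def)
next
  case (Suc_Suc m)
  have "degree (geom_poly a m) \<le> (a (Suc m) - 1) * dd a m"
    unfolding geom_poly_def by (rule degree_sum_le) (auto intro!: order.trans[OF degree_monom_le])
  then have "degree (chi_poly a (Suc (Suc m))) \<le> (a (Suc m) - 1) * dd a m + degree (chi_poly a m)"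
    using degree_mult_le[of "geom_poly a m" "chi_poly a m"] by simp
  moreover have "int ((a (Suc m) - 1) * dd a m) = int (dd a (Suc m)) - int (dd a m)"
    using a_pos[of "Suc m"] by (simp add: dd_Suc of_nat_diff algebra_simps)
  ultimately have "int (degree (chi_poly a (Suc (Suc m))))
      \<le> int (dd a (Suc m)) - int (dd a m) + int (degree (chi_poly a m))"
    by linarith
  then show ?case
    using Suc_Suc.IH by (simp add: mutilde_Suc_Suc)
qed simp

end

section \<open>Discrete Fourier sums\<close>

definition aliased_coeff :: "complex poly \<Rightarrow> nat \<Rightarrow> int \<Rightarrow> complex" where
  "aliased_coeff p N k = (\<Sum>m\<le>degree p. if int N dvd int m - k then coeff p m else 0)"

definition dft_term :: "complex poly \<Rightarrow> nat \<Rightarrow> int \<Rightarrow> int \<Rightarrow> nat \<Rightarrow> complex" where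
  "dft_term p N s k \<kappa> =
     poly p (ee (of_int s * real \<kappa> / real N)) * ee (- (of_int s * real \<kappa> * of_int k / real N))"

lemma sum_dft_term:
  assumes "N > 0" and "\<bar>s\<bar> = 1"
  shows "(\<Sum>\<kappa>\<in>{1..N}. dft_term p N s k \<kappa>) = of_nat N * aliased_coeff p N k"
proof -
  have unit: "int N dvd s * x \<longleftrightarrow> int N dvd x" for x
    using \<open>\<bar>s\<bar> = 1\<close> by (auto simp: abs_if split: if_splits)
  have "(\<Sum>\<kappa>\<in>{1..N}. dft_term p N s k \<kappa>)
      = (\<Sum>\<kappa>\<in>{1..N}. \<Sum>m\<le>degree p. coeff p m * ee (of_int (s * (int m - k)) * real \<kappa> / real N))"
    unfolding dft_term_def poly_altdef sum_distrib_right
    by (intro sum.cong refl) (simp add: ee_power mult.assoc ee_add[symmetric] field_simps)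
  also have "\<dots> = (\<Sum>m\<le>degree p. coeff p m * (\<Sum>\<kappa>\<in>{1..N}. ee (of_int (s * (int m - k)) * real \<kappa> / real N)))"
    by (subst sum.swap) (simp add: sum_distrib_left)
  also have "\<dots> = of_nat N * aliased_coeff p N k"
    unfolding sum_ee_roots_of_unity[OF \<open>N > 0\<close>] unit aliased_coeff_def
    by (simp add: sum_distrib_left if_distrib mult_ac cong: if_cong)
  finally show ?thesis .
qed

lemma dft_term_mult: "0 < A \<Longrightarrow> dft_term p (A * N) s k (A * \<kappa>) = dft_term p N s k \<kappa>"
  by (simp add: dft_term_def mult.assoc)

lemma aliased_coeff_eq_coeff:
  assumes "int (degree p) + int L \<le> int N" and "\<bar>k\<bar> < int L"
  shows "aliased_coeff p N k = (if k \<ge> 0 then coeff p (nat k) else 0)"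
proof -
  have "int N dvd int m - k \<longleftrightarrow> k \<ge> 0 \<and> m = nat k" if "m \<le> degree p" for m
  proof
    assume dvd: "int N dvd int m - k"
    have "\<bar>int m - k\<bar> < int N"
      using assms that by auto
    then have "int m - k = 0"
      using dvd_imp_le_int[OF _ dvd] by fastforce
    then show "k \<ge> 0 \<and> m = nat k"
      by auto
  qed auto
  then have "aliased_coeff p N k = (\<Sum>m\<le>degree p. if k \<ge> 0 \<and> m = nat k then coeff p m else 0)"
    unfolding aliased_coeff_def by (intro sum.cong refl) simp
  also have "\<dots> = (if k \<ge> 0 then coeff p (nat k) else 0)"
    by (cases "k \<ge> 0") (auto simp: coeff_eq_0)
  finally show ?thesis .
qed

lemma multiples_image:
  assumes "(A::nat) > 0"
  shows "{k\<in>{1..A * D}. A dvd k} = (*) A ` {1..D}"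
proof (intro equalityI subsetI)
  fix k assume "k \<in> {k\<in>{1..A * D}. A dvd k}"
  then obtain j where k: "k = A * j" and "1 \<le> A * j" "A * j \<le> A * D"
    by (auto elim!: dvdE)
  then have "j \<in> {1..D}"
    using assms by (simp add: Suc_le_eq)
  then show "k \<in> (*) A ` {1..D}"
    using k by blast
next
  fix k assume "k \<in> (*) A ` {1..D}"
  then show "k \<in> {k\<in>{1..A * D}. A dvd k}"
    using assms by auto
qed

lemma sum_multiples:
  assumes "(A::nat) > 0"
  shows "(\<Sum>k\<in>{k\<in>{1..A * D}. A dvd k}. g k) = (\<Sum>j\<in>{1..D}. g (A * j))"
  unfolding multiples_image[OF assms] using assms by (subst sum.reindex) (auto simp: inj_on_def)

lemma split_multiples: "{1..N} = {k\<in>{1..N}. \<not> A dvd k} \<union> {k\<in>{1..N}. A dvd k}"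
  by auto

lemma sum_non_multiples:
  assumes "(A::nat) > 0"
  shows "(\<Sum>k\<in>{k\<in>{1..A * D}. \<not> A dvd k}. g k)
    = (\<Sum>k\<in>{1..A * D}. g k) - (\<Sum>j\<in>{1..D}. (g (A * j) :: 'a :: ab_group_add))"
proof -
  have "(\<Sum>k\<in>{1..A * D}. g k) = (\<Sum>k\<in>{k\<in>{1..A * D}. \<not> A dvd k}. g k) + (\<Sum>k\<in>{k\<in>{1..A * D}. A dvd k}. g k)"
    by (subst split_multiples[of "A * D" A], rule sum.union_disjoint) auto
  then show ?thesis
    unfolding sum_multiples[OF assms] by simp
qed

lemma card_non_multiples:
  assumes "(A::nat) > 0"
  shows "card {k\<in>{1..A * D}. \<not> A dvd k} = A * D - D"
proof -
  have "card {1..A * D} = card {k\<in>{1..A * D}. \<not> A dvd k} + card {k\<in>{1..A * D}. A dvd k}"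
    by (subst split_multiples[of "A * D" A], rule card_Un_disjoint) auto
  moreover have "card {k\<in>{1..A * D}. A dvd k} = D"
    unfolding multiples_image[OF assms] using assms by (subst card_image) (auto simp: inj_on_def)
  ultimately show ?thesis by simp
qed

context positive_sequence
begin

lemma sum_dft_term_geom_poly:
  assumes "\<bar>s\<bar> = 1"
  shows "(\<Sum>\<kappa>\<in>{1..dd a (Suc m)}. dft_term (geom_poly a m * q) (dd a (Suc m)) s k \<kappa>)
    = of_nat (dd a (Suc m)) * aliased_coeff q (dd a m) k"
proof -
  define A where "A = a (Suc m)"
  have "A > 0" "dd a m > 0"
    using a_pos[of "Suc m"] dd_pos by (simp_all add: A_def)
  have dd_Suc': "dd a (Suc m) = A * dd a m"
    by (simp add: A_def dd_Suc mult.commute)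
  have geom: "poly (geom_poly a m) (ee (of_int s * real \<kappa> / real (dd a (Suc m))))
      = (if A dvd \<kappa> then of_nat A else 0)" for \<kappa>
  proof -
    define w where "w = ee (of_int s * real \<kappa> / real (dd a (Suc m)))"
    have "w ^ dd a (Suc m) = 1"
      using dd_pos[of "Suc m"] by (simp add: w_def ee_power)
    moreover have "w ^ dd a m = 1 \<longleftrightarrow> A dvd \<kappa>"
    proof -
      have "w ^ dd a m = ee (of_int (s * int \<kappa>) / of_int (int A))"
        using \<open>dd a m > 0\<close> by (simp add: w_def ee_power dd_Suc')
      also have "\<dots> = 1 \<longleftrightarrow> int A dvd s * int \<kappa>"
        using \<open>A > 0\<close> by (intro ee_div_eq_1_iff) simp
      also have "\<dots> \<longleftrightarrow> A dvd \<kappa>"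
        using assms by (auto simp: abs_if split: if_splits)
      finally show ?thesis .
    qed
    ultimately show ?thesis
      using poly_geom_poly_root[of w a m] by (simp add: w_def A_def)
  qed
  have "(\<Sum>\<kappa>\<in>{1..dd a (Suc m)}. dft_term (geom_poly a m * q) (dd a (Suc m)) s k \<kappa>)
      = (\<Sum>\<kappa>\<in>{1..dd a (Suc m)}. if A dvd \<kappa> then of_nat A * dft_term q (dd a (Suc m)) s k \<kappa> else 0)"
    by (intro sum.cong refl) (simp add: dft_term_def geom)
  also have "\<dots> = (\<Sum>\<kappa>\<in>{\<kappa>\<in>{1..A * dd a m}. A dvd \<kappa>}. of_nat A * dft_term q (A * dd a m) s k \<kappa>)"
    unfolding dd_Suc' by (rule sum.inter_filter[symmetric]) simp
  also have "\<dots> = of_nat A * (\<Sum>\<kappa>\<in>{1..dd a m}. dft_term q (dd a m) s k \<kappa>)"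
    unfolding sum_multiples[OF \<open>A > 0\<close>] dft_term_mult[OF \<open>A > 0\<close>] by (simp add: sum_distrib_left)
  also have "\<dots> = of_nat (dd a (Suc m)) * aliased_coeff q (dd a m) k"
    unfolding sum_dft_term[OF \<open>dd a m > 0\<close> assms] dd_Suc' by simp
  finally show ?thesis .
qed

end

section \<open>The exponents \<open>\<omega>\<close> and the Gamma factors\<close>

lemma omega_eq_frac: "omega a n k l = frac ((-1) ^ (l - 1) * real (dd a (l - 1)) / real (dd a n) * real k)"
  by (simp add: omega_def frac_def Let_def)

lemma ee_omega:
  assumes "1 \<le> l" "l \<le> n"
  shows "ee ((-1) ^ (n - l) * omega a n k l) = ee ((-1) ^ (n - 1) * real k / real (dd a n)) ^ dd a (l - 1)"
proof -
  define x where "x = (-1) ^ (l - 1) * real (dd a (l - 1)) / real (dd a n) * real k"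
  have sign: "(-1::real) ^ (n - l) * (-1) ^ (l - 1) = (-1) ^ (n - 1)"
    using assms by (simp flip: power_add)
  have "(-1) ^ (n - l) * omega a n k l = (-1) ^ (n - l) * x - of_int ((-1) ^ (n - l) * \<lfloor>x\<rfloor>)"
    by (simp add: omega_eq_frac frac_def x_def algebra_simps)
  also have "(-1) ^ (n - l) * x = real (dd a (l - 1)) * ((-1) ^ (n - 1) * real k / real (dd a n))"
    unfolding x_def sign[symmetric] by (simp add: field_simps)
  finally show ?thesis
    using ee_add_Ints[of "- of_int ((-1) ^ (n - l) * \<lfloor>x\<rfloor>)"] by (simp add: ee_power)
qed

context positive_sequence
begin

lemma omega_not_Ints:
  assumes "1 \<le> l" "l \<le> n" "\<not> a n dvd k"
  shows "(-1) ^ (l - 1) * real (dd a (l - 1)) / real (dd a n) * real k \<notin> \<int>"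
proof
  define R where "R = (\<Prod>i\<in>{l - 1<..n}. a i)"
  have dd_n: "dd a n = dd a (l - 1) * R"
    using dd_split[of "l - 1" n a] assms by (simp add: R_def)
  have "a n dvd R"
    unfolding R_def using assms by (intro dvd_prodI) auto
  have "R > 0"
    using dd_pos[of n] dd_n by (simp add: nat_0_less_mult_iff)
  have eq: "(-1) ^ (l - 1) * real (dd a (l - 1)) / real (dd a n) * real k
      = of_int ((-1) ^ (l - 1) * int k) / of_int (int R)"
    using dd_pos[of "l - 1"] by (simp add: dd_n)
  assume "(-1) ^ (l - 1) * real (dd a (l - 1)) / real (dd a n) * real k \<in> \<int>"
  then have "int R dvd (-1) ^ (l - 1) * int k"
    using \<open>R > 0\<close> unfolding eq of_int_div_of_int_in_Ints_iff by simp
  then have "R dvd k"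
    by (cases "even (l - 1)") simp_all
  then show False
    using \<open>a n dvd R\<close> assms(3) dvd_trans by blast
qed

lemma omega_bounds:
  assumes "1 \<le> l" "l \<le> n" "\<not> a n dvd k"
  shows "0 < omega a n k l" "omega a n k l < 1"
  using omega_not_Ints[OF assms] by (simp_all add: omega_eq_frac frac_lt_1)

lemma omega_reflect:
  assumes "1 \<le> l" "l \<le> n" "\<not> a n dvd k" "k \<le> dd a n"
  shows "omega a n (dd a n - k) l = 1 - omega a n k l"
proof -
  define x where "x = (-1) ^ (l - 1) * real (dd a (l - 1)) / real (dd a n) * real k"
  have "(-1) ^ (l - 1) * real (dd a (l - 1)) / real (dd a n) * real (dd a n - k)
      = of_int ((-1) ^ (l - 1) * int (dd a (l - 1))) + - x"
    using assms(4) dd_pos[of n] by (simp add: x_def of_nat_diff field_simps)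
  then have "omega a n (dd a n - k) l = frac (of_int ((-1) ^ (l - 1) * int (dd a (l - 1))) + - x)"
    by (simp only: omega_eq_frac)
  also have "\<dots> = 1 - frac x"
    using omega_not_Ints[OF assms(1-3)] by (simp only: frac_add_of_int_left frac_neg x_def) simp
  finally show ?thesis
    by (simp add: omega_eq_frac x_def)
qed

lemma omega_1:
  assumes "0 < k" "k < dd a n"
  shows "omega a n k 1 = real k / real (dd a n)"
  using assms by (simp add: omega_eq_frac)

end

lemma ee_sign_not_1:
  assumes "0 < x" "x < 1"
  shows "ee ((-1) ^ j * x) \<noteq> 1"
proof
  assume "ee ((-1) ^ j * x) = 1"
  then have "x \<in> \<int>"
    by (cases "even j") (simp_all add: ee_eq_1_iff minus_in_Ints_iff)
  then obtain z where "x = of_int z"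
    by (auto elim: Ints_cases)
  then show False
    using assms by simp
qed

lemma Gamma_reflection_ee:
  assumes "0 < x" "x < 1"
  shows "Gamma (complex_of_real (1 - x)) * Gamma (complex_of_real x) * ee ((x - 1/2) / 2)
    = 2 * complex_of_real pi / (1 - ee (- x))"
proof -
  define u where "u = exp (\<i> * complex_of_real (pi * x))"
  have "u \<noteq> 0"
    by (simp add: u_def)
  have sin_u: "sin (complex_of_real pi * complex_of_real x) = (u - inverse u) / (2 * \<i>)"
    unfolding sin_exp_eq u_def by (simp add: exp_minus)
  have "sin (pi * x) \<noteq> 0"
    using assms sin_gt_zero[of "pi * x"] by fastforce
  then have "u - inverse u \<noteq> 0"
    using sin_u sin_of_real[of "pi * x"] by (metis divide_eq_0_iff of_real_eq_0_iff of_real_mult)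
  have ee_half: "ee ((x - 1/2) / 2) = - \<i> * u"
  proof -
    have "ee ((x - 1/2) / 2) = exp (\<i> * complex_of_real (pi * x) + \<i> * complex_of_real (- pi / 2))"
      unfolding ee_def by (rule arg_cong[of _ _ exp]) (simp add: field_simps)
    also have "\<dots> = u * exp (\<i> * complex_of_real (- pi / 2))"
      by (simp only: exp_add u_def)
    also have "exp (\<i> * complex_of_real (- pi / 2)) = - \<i>"
      by (simp add: exp_Euler cos_of_real sin_of_real flip: of_real_minus) (simp add: of_real_minus)
    finally show ?thesis
      by simp
  qed
  have ee_minus_x: "ee (- x) = inverse (u ^ 2)"
  proof -
    have "ee (- x) = exp (- (2 * (\<i> * complex_of_real (pi * x))))"
      unfolding ee_def by (rule arg_cong[of _ _ exp]) (simp add: field_simps)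
    then show ?thesis
      by (simp add: u_def exp_minus exp_double power2_eq_square)
  qed
  have "Gamma (complex_of_real x) * Gamma (1 - complex_of_real x) = of_real pi / ((u - inverse u) / (2 * \<i>))"
    using Gamma_reflection_complex[of "complex_of_real x"] by (simp add: sin_u)
  then show ?thesis
    using \<open>u \<noteq> 0\<close> \<open>u - inverse u \<noteq> 0\<close> unfolding ee_half ee_minus_x
    by (simp add: field_simps power2_eq_square)
qed

lemma Gamma_reflection_ee_parity:
  assumes "0 < x" "x < 1"
  shows "Gamma (complex_of_real (1 - x)) * Gamma (complex_of_real x) * ee ((x - 1/2) / 2)
       * (if even j then (1 - ee x) * (1 - ee (1 - x)) else 1)
     = 2 * complex_of_real pi * (if even j then 1 - ee ((-1) ^ j * x) else inverse (1 - ee ((-1) ^ j * x)))"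
proof -
  have "1 - ee (- x) \<noteq> 0"
    using ee_sign_not_1[OF assms, of 1] by simp
  then show ?thesis
    unfolding Gamma_reflection_ee[OF assms] ee_one_minus
    by (cases "even j") (simp_all add: divide_inverse)
qed

lemma prod_even_distance:
  fixes g :: "nat \<Rightarrow> 'a :: comm_monoid_mult"
  shows "(if odd n then (\<Prod>i\<in>{1..(n + 1) div 2}. g (2 * i - 1)) else (\<Prod>i\<in>{1..n div 2}. g (2 * i)))
    = (\<Prod>l\<in>{l\<in>{1..n}. even (n - l)}. g l)"
proof (cases "odd n")
  case True
  have "(\<Prod>i\<in>{1..(n + 1) div 2}. g (2 * i - 1)) = (\<Prod>l\<in>{l\<in>{1..n}. even (n - l)}. g l)"
    by (rule prod.reindex_bij_witness[of _ "\<lambda>l. (l + 1) div 2" "\<lambda>i. 2 * i - 1"])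
      (use True in \<open>auto; presburger\<close>)+
  then show ?thesis
    using True by simp
next
  case False
  have "(\<Prod>i\<in>{1..n div 2}. g (2 * i)) = (\<Prod>l\<in>{l\<in>{1..n}. even (n - l)}. g l)"
    by (rule prod.reindex_bij_witness[of _ "\<lambda>l. l div 2" "\<lambda>i. 2 * i"])
      (use False in \<open>auto; presburger\<close>)+
  then show ?thesis
    using False by simp
qed

lemma cc_eq_prod:
  "cc a n k = (\<Prod>l\<in>{1..n}. Gamma (complex_of_real (1 - omega a n k l)))
    * (\<Prod>l\<in>{1..n}. if even (n - l) then 1 - ee (omega a n k l) else 1)"
  unfolding cc_def prod_even_distance[of n "\<lambda>l. 1 - ee (omega a n k l)"]
  by (simp only: prod.inter_filter[OF finite_atLeastAtMost])

lemma Qt_top: "1 \<le> n \<Longrightarrow> Qt a n (n, k) = (\<Sum>l\<in>{1..n}. omega a n k l - 1/2)"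
  by (cases n; cases "n - 1") simp_all

lemma chG_top:
  "1 \<le> n \<Longrightarrow> chG a n (n, k) j = cc a n k * ee ((-1) ^ (n - 1) * omega a n k 1 * of_int (j - 1))"
  by (cases n; cases "n - 1") simp_all

context positive_sequence
begin

lemma cc_pair:
  assumes "1 \<le> n" "k \<in> {1..dd a n}" "\<not> a n dvd k"
  shows "cc a n k * ee (1/2 * Qt a n (n, k)) * cc a n (dd a n - k)
    = (2 * complex_of_real pi) ^ n * poly (chi_poly a n) (ee ((-1) ^ (n - 1) * real k / real (dd a n)))"
proof -
  define w where "w = ee ((-1) ^ (n - 1) * real k / real (dd a n))"
  define x where "x l = omega a n k l" for l
  have x_bounds: "0 < x l" "x l < 1" if "l \<in> {1..n}" for l
    using omega_bounds[of l n k] that assms by (auto simp: x_def)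
  have x_reflect: "omega a n (dd a n - k) l = 1 - x l" if "l \<in> {1..n}" for l
    using omega_reflect[of l n k] that assms by (auto simp: x_def)
  have w_pow: "ee ((-1) ^ (n - l) * x l) = w ^ dd a (l - 1)" if "l \<in> {1..n}" for l
    using ee_omega[of l n a k] that by (simp add: x_def w_def)
  have Qt: "ee (1/2 * Qt a n (n, k)) = (\<Prod>l\<in>{1..n}. ee ((x l - 1/2) / 2))"
    unfolding Qt_top[OF assms(1)] sum_distrib_left ee_sum[symmetric] by (simp add: x_def)
  have cc_reflect: "cc a n (dd a n - k) = (\<Prod>l\<in>{1..n}. Gamma (complex_of_real (x l)))
      * (\<Prod>l\<in>{1..n}. if even (n - l) then 1 - ee (1 - x l) else 1)"
    unfolding cc_eq_prod by (intro arg_cong2[where f = "(*)"] prod.cong) (simp_all add: x_reflect)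
  have "cc a n k * ee (1/2 * Qt a n (n, k)) * cc a n (dd a n - k)
      = (\<Prod>l\<in>{1..n}. Gamma (complex_of_real (1 - x l)) * Gamma (complex_of_real (x l))
          * ee ((x l - 1/2) / 2) * (if even (n - l) then 1 - ee (x l) else 1)
          * (if even (n - l) then 1 - ee (1 - x l) else 1))"
    unfolding cc_reflect Qt cc_eq_prod[of a n k] x_def[symmetric] by (simp add: prod.distrib mult_ac)
  also have "\<dots> = (\<Prod>l\<in>{1..n}. 2 * complex_of_real pi
      * (if even (n - l) then 1 - w ^ dd a (l - 1) else inverse (1 - w ^ dd a (l - 1))))"
  proof (rule prod.cong)
    fix l assume "l \<in> {1..n}"
    then show "Gamma (complex_of_real (1 - x l)) * Gamma (complex_of_real (x l))
          * ee ((x l - 1/2) / 2) * (if even (n - l) then 1 - ee (x l) else 1)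
          * (if even (n - l) then 1 - ee (1 - x l) else 1)
        = 2 * complex_of_real pi
          * (if even (n - l) then 1 - w ^ dd a (l - 1) else inverse (1 - w ^ dd a (l - 1)))"
      using Gamma_reflection_ee_parity[OF x_bounds, of l "n - l"] w_pow[of l]
      by (cases "even (n - l)") (simp_all add: mult_ac)
  qed simp
  also have "\<dots> = (2 * complex_of_real pi) ^ n * poly (chi_poly a n) w"
  proof -
    have "w ^ dd a (l - 1) \<noteq> 1" if "l \<in> {1..n}" for l
      using w_pow[OF that] ee_sign_not_1[OF x_bounds[OF that]] by metis
    then have "poly (chi_poly a n) w = (\<Prod>l\<in>{1..n}.
        if even (n - l) then 1 - w ^ dd a (l - 1) else inverse (1 - w ^ dd a (l - 1)))"
      by (rule poly_chi_poly)
    then show ?thesis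
      by (simp add: prod.distrib)
  qed
  finally show ?thesis
    by (simp add: w_def)
qed

lemma chG_pair:
  assumes "1 \<le> n" "k \<in> {1..dd a n}" "\<not> a n dvd k"
  shows "chG a n (n, k) i * ee (1/2 * Qt a n (n, k)) * chG a n (n, dd a n - k) j
    = (2 * complex_of_real pi) ^ n * dft_term (chi_poly a n) (dd a n) ((-1) ^ (n - 1)) (j - i) k"
proof -
  define t where "t = real k / real (dd a n)"
  have "k \<noteq> dd a n"
    using assms dd_Suc[of a "n - 1"] by auto
  then have "k < dd a n"
    using assms by auto
  have omega_k: "omega a n k 1 = t"
    using omega_1 \<open>k < dd a n\<close> assms by (simp add: t_def)
  have omega_dk: "omega a n (dd a n - k) 1 = 1 - t"
    using omega_reflect[of 1 n k] omega_k assms by simp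
  have phase_sum: "(-1) ^ (n - 1) * t * of_int (i - 1) + (-1) ^ (n - 1) * (1 - t) * of_int (j - 1)
      = - ((-1) ^ (n - 1) * real k * of_int (j - i) / real (dd a n)) + of_int ((-1) ^ (n - 1) * (j - 1))"
    using dd_pos[of n] by (simp add: t_def field_simps)
  have phase: "ee ((-1) ^ (n - 1) * t * of_int (i - 1)) * ee ((-1) ^ (n - 1) * (1 - t) * of_int (j - 1))
      = ee (- ((-1) ^ (n - 1) * real k * of_int (j - i) / real (dd a n)))"
    unfolding ee_add[symmetric] phase_sum by (rule ee_add_Ints) simp
  have "chG a n (n, k) i * ee (1/2 * Qt a n (n, k)) * chG a n (n, dd a n - k) j
      = (cc a n k * ee (1/2 * Qt a n (n, k)) * cc a n (dd a n - k))
        * (ee ((-1) ^ (n - 1) * t * of_int (i - 1)) * ee ((-1) ^ (n - 1) * (1 - t) * of_int (j - 1)))"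
    unfolding chG_top[OF assms(1)] omega_k omega_dk by (simp only: mult_ac)
  then show ?thesis
    unfolding cc_pair[OF assms] phase by (simp add: dft_term_def)
qed

end

section \<open>The pairing \<open>ch\<^sup>T e[Q/2] \<eta> ch\<close>\<close>

lemma set_Iprime: "set (Iprime a n) = Pair n ` {k\<in>{1..dd a n}. \<not> a n dvd k}"
  by (auto simp: Iprime_def)

lemma distinct_Iprime: "distinct (Iprime a n)"
  by (auto simp: Iprime_def distinct_map inj_on_def)

lemma fst_Iset_le: "p \<in> set (Iset a n) \<Longrightarrow> fst p \<le> n"
  by (induction n arbitrary: p rule: nat_induct_Suc_Suc) (fastforce simp: Iprime_def)+

lemma distinct_Iset: "distinct (Iset a n)"
proof (induction n rule: nat_induct_Suc_Suc)
  case (Suc_Suc m)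
  have "set (Iprime a (Suc (Suc m))) \<inter> set (Iset a m) = {}"
    using fst_Iset_le[of _ a m] by (fastforce simp: Iprime_def)
  then show ?case
    using Suc_Suc distinct_Iprime[of a "Suc (Suc m)"] by simp
qed (simp_all add: distinct_Iprime)

lemma (in positive_sequence) length_Iset: "int (length (Iset a n)) = mutilde a n"
proof -
  have length_Iprime: "int (length (Iprime a (Suc m))) = int (dd a (Suc m)) - int (dd a m)" for m
  proof -
    have "length (Iprime a (Suc m)) = card (set (Iprime a (Suc m)))"
      using distinct_card[OF distinct_Iprime] by simp
    also have "\<dots> = card {k\<in>{1..a (Suc m) * dd a m}. \<not> a (Suc m) dvd k}"
      unfolding set_Iprime by (subst card_image) (auto simp: inj_on_def dd_Suc mult.commute)
    also have "\<dots> = dd a (Suc m) - dd a m"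
      using card_non_multiples[OF a_pos[of "Suc m"]] by (simp add: dd_Suc mult.commute)
    finally show ?thesis
      using a_pos[of "Suc m"] by (simp add: dd_Suc of_nat_diff)
  qed
  show ?thesis
  proof (induction n rule: nat_induct_Suc_Suc)
    case 1
    show ?case
      using length_Iprime[of 0] by (simp add: mutilde_1 dd_Suc)
  next
    case (Suc_Suc m)
    then show ?case
      using length_Iprime[of "Suc m"] by (simp add: mutilde_Suc_Suc)
  qed simp
qed

definition ch_pairing :: "(nat \<Rightarrow> nat) \<Rightarrow> nat \<Rightarrow> (nat \<times> nat) set \<Rightarrow> int \<Rightarrow> int \<Rightarrow> complex" where
  "ch_pairing a n X i j =
     (\<Sum>p\<in>X. \<Sum>q\<in>X. chG a n p i * ee (1/2 * Qt a n p) * eta a n p q * chG a n q j)"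

lemma eta_top:
  "1 \<le> n \<Longrightarrow> eta a n (n, k) (n, l) = (if k + l = dd a n then 1 / of_nat (dd a n) else 0)"
  by (cases n; cases "n - 1") (simp_all add: dd_def)

lemma
  assumes "fst p \<le> m" "fst q \<le> m"
  shows chG_Suc_Suc_lower: "chG a (Suc (Suc m)) p j = 2 * complex_of_real pi * \<i> * chG a m p j"
    and Qt_Suc_Suc_lower: "Qt a (Suc (Suc m)) p = Qt a m p"
    and eta_Suc_Suc_lower: "eta a (Suc (Suc m)) p q = - (1 / of_nat (a (Suc (Suc m)))) * eta a m p q"
  using assms by (cases p; cases q; simp)+

lemma eta_Suc_Suc_cross:
  assumes "fst p = Suc (Suc m)" "fst q \<le> m"
  shows "eta a (Suc (Suc m)) p q = 0" "eta a (Suc (Suc m)) q p = 0"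
  using assms by (cases p; cases q; simp)+

lemma ch_pairing_Iset_Suc_Suc:
  "ch_pairing a (Suc (Suc m)) (set (Iset a (Suc (Suc m)))) i j
    = ch_pairing a (Suc (Suc m)) (set (Iprime a (Suc (Suc m)))) i j
      + 4 * complex_of_real pi ^ 2 / of_nat (a (Suc (Suc m))) * ch_pairing a m (set (Iset a m)) i j"
proof -
  define n where "n = Suc (Suc m)"
  define P where "P = set (Iprime a n)"
  define S where "S = set (Iset a m)"
  define T where "T p q = chG a n p i * ee (1/2 * Qt a n p) * eta a n p q * chG a n q j" for p q
  have fst_P: "fst p = n" if "p \<in> P" for p
    using that by (auto simp: P_def Iprime_def)
  have fst_S: "fst p \<le> m" if "p \<in> S" for p
    using that fst_Iset_le by (auto simp: S_def)
  have "P \<inter> S = {}"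
    using fst_P fst_S by (fastforce simp: n_def)
  then have "ch_pairing a n (P \<union> S) i j
      = (\<Sum>p\<in>P. \<Sum>q\<in>P. T p q) + (\<Sum>p\<in>P. \<Sum>q\<in>S. T p q) + ((\<Sum>p\<in>S. \<Sum>q\<in>P. T p q) + (\<Sum>p\<in>S. \<Sum>q\<in>S. T p q))"
    by (simp add: ch_pairing_def T_def P_def S_def sum.union_disjoint sum.distrib)
  also have "(\<Sum>p\<in>P. \<Sum>q\<in>S. T p q) = 0"
    using fst_P fst_S by (auto intro!: sum.neutral simp: T_def eta_Suc_Suc_cross n_def)
  also have "(\<Sum>p\<in>S. \<Sum>q\<in>P. T p q) = 0"
    using fst_P fst_S by (auto intro!: sum.neutral simp: T_def eta_Suc_Suc_cross n_def)
  also have "(\<Sum>p\<in>S. \<Sum>q\<in>S. T p q) = 4 * complex_of_real pi ^ 2 / of_nat (a n) * ch_pairing a m S i j"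
    unfolding ch_pairing_def sum_distrib_left
  proof (intro sum.cong refl)
    fix p q assume "p \<in> S" "q \<in> S"
    then have "fst p \<le> m" "fst q \<le> m"
      using fst_S by auto
    then show "T p q = 4 * complex_of_real pi ^ 2 / of_nat (a n)
        * (chG a m p i * ee (1/2 * Qt a m p) * eta a m p q * chG a m q j)"
      by (simp add: T_def n_def chG_Suc_Suc_lower Qt_Suc_Suc_lower eta_Suc_Suc_lower
          power2_eq_square field_simps)
  qed
  finally show ?thesis
    by (simp add: ch_pairing_def T_def P_def S_def n_def)
qed

context positive_sequence
begin

lemma ch_pairing_Iprime:
  "ch_pairing a (Suc n) (set (Iprime a (Suc n))) i j
    = (2 * complex_of_real pi) ^ Suc n * aliased_coeff (chi_poly a (Suc n)) (dd a (Suc n)) (j - i)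
      - (2 * complex_of_real pi) ^ Suc n / of_nat (dd a (Suc n))
        * (\<Sum>\<kappa>\<in>{1..dd a n}. dft_term (chi_poly a (Suc n)) (dd a n) ((-1) ^ n) (j - i) \<kappa>)"
proof -
  define N where "N = Suc n"
  define d where "d = dd a N"
  define K where "K = {k\<in>{1..d}. \<not> a N dvd k}"
  define g where "g = dft_term (chi_poly a N) d ((-1) ^ n) (j - i)"
  have d: "d = a N * dd a n"
    by (simp add: d_def N_def dd_Suc mult.commute)
  have "a N > 0" "d > 0"
    using a_pos dd_pos by (simp_all add: d_def N_def)
  have "finite K"
    by (simp add: K_def)
  have reflect: "d - k \<in> K" if "k \<in> K" for k
  proof -
    have "a N dvd d"
      using d by simp
    moreover have "k \<in> {1..d}" "\<not> a N dvd k"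
      using that by (auto simp: K_def)
    ultimately have "k < d" "\<not> a N dvd d - k"
      using dvd_diff_nat[of "a N" d "d - k"] by (auto simp: order.order_iff_strict)
    then show ?thesis
      by (auto simp: K_def)
  qed
  have "ch_pairing a N (set (Iprime a N)) i j
      = (\<Sum>k\<in>K. \<Sum>l\<in>K. chG a N (N, k) i * ee (1/2 * Qt a N (N, k)) * eta a N (N, k) (N, l) * chG a N (N, l) j)"
    unfolding ch_pairing_def set_Iprime K_def d_def by (simp add: sum.reindex inj_on_def)
  also have "\<dots> = (\<Sum>k\<in>K. chG a N (N, k) i * ee (1/2 * Qt a N (N, k)) * chG a N (N, d - k) j / of_nat d)"
  proof (rule sum.cong)
    fix k assume "k \<in> K"
    then have "k + l = d \<longleftrightarrow> l = d - k" for l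
      by (auto simp: K_def)
    then have "eta a N (N, k) (N, l) = (if l = d - k then 1 / of_nat d else 0)" for l
      using eta_top[of N a k l] by (simp add: N_def d_def)
    then show "(\<Sum>l\<in>K. chG a N (N, k) i * ee (1/2 * Qt a N (N, k)) * eta a N (N, k) (N, l) * chG a N (N, l) j)
        = chG a N (N, k) i * ee (1/2 * Qt a N (N, k)) * chG a N (N, d - k) j / of_nat d"
      using reflect[OF \<open>k \<in> K\<close>] \<open>finite K\<close>
      by (simp add: if_distrib[of "\<lambda>x. _ * x * _"] sum.delta cong: if_cong)
  qed simp
  also have "\<dots> = (2 * complex_of_real pi) ^ N / of_nat d * (\<Sum>k\<in>K. g k)"
    unfolding sum_distrib_left
  proof (intro sum.cong refl)
    fix k assume "k \<in> K"
    then show "chG a N (N, k) i * ee (1/2 * Qt a N (N, k)) * chG a N (N, d - k) j / of_nat d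
        = (2 * complex_of_real pi) ^ N / of_nat d * g k"
      using chG_pair[of N k i j] by (simp add: K_def d_def g_def N_def)
  qed
  also have "(\<Sum>k\<in>K. g k) = (\<Sum>k\<in>{1..d}. g k) - (\<Sum>\<kappa>\<in>{1..dd a n}. g (a N * \<kappa>))"
    unfolding K_def d by (rule sum_non_multiples[OF \<open>a N > 0\<close>])
  also have "(\<Sum>k\<in>{1..d}. g k) = of_nat d * aliased_coeff (chi_poly a N) d (j - i)"
    unfolding g_def by (rule sum_dft_term[OF \<open>d > 0\<close>]) simp
  also have "(\<Sum>\<kappa>\<in>{1..dd a n}. g (a N * \<kappa>))
      = (\<Sum>\<kappa>\<in>{1..dd a n}. dft_term (chi_poly a N) (dd a n) ((-1) ^ n) (j - i) \<kappa>)"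
    unfolding g_def d dft_term_mult[OF \<open>a N > 0\<close>] ..
  finally show ?thesis
    using \<open>d > 0\<close> by (simp add: d_def N_def field_simps)
qed

lemma ch_pairing_Iset:
  "ch_pairing a n (set (Iset a n)) i j = (2 * complex_of_real pi) ^ n * aliased_coeff (chi_poly a n) (dd a n) (j - i)"
proof (induction n rule: nat_induct_Suc_Suc)
  case 0
  then show ?case
    by (simp add: ch_pairing_def aliased_coeff_def)
next
  case 1
  have "dft_term (chi_poly a 1) (dd a 0) 1 (j - i) 1 = 0"
    by (simp add: dft_term_def)
  then show ?case
    using ch_pairing_Iprime[of 0 i j] by simp
next
  case (Suc_Suc m)
  define c where "c = 2 * complex_of_real pi"
  have missing: "(\<Sum>\<kappa>\<in>{1..dd a (Suc m)}. dft_term (chi_poly a (Suc (Suc m))) (dd a (Suc m)) ((-1) ^ Suc m) (j - i) \<kappa>)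
      = of_nat (dd a (Suc m)) * aliased_coeff (chi_poly a m) (dd a m) (j - i)"
    using sum_dft_term_geom_poly[of "(-1) ^ Suc m" m "chi_poly a m"] by simp
  have "a (Suc (Suc m)) > 0" "dd a (Suc m) > 0"
    using a_pos[of "Suc (Suc m)"] dd_pos by simp_all
  have "ch_pairing a (Suc (Suc m)) (set (Iset a (Suc (Suc m)))) i j
      = c ^ Suc (Suc m) * aliased_coeff (chi_poly a (Suc (Suc m))) (dd a (Suc (Suc m))) (j - i)
        - c ^ Suc (Suc m) / of_nat (dd a (Suc (Suc m))) * (of_nat (dd a (Suc m)) * aliased_coeff (chi_poly a m) (dd a m) (j - i))
        + c ^ 2 / of_nat (a (Suc (Suc m))) * (c ^ m * aliased_coeff (chi_poly a m) (dd a m) (j - i))"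
    unfolding ch_pairing_Iset_Suc_Suc ch_pairing_Iprime missing Suc_Suc.IH c_def
    by (simp add: power2_eq_square)
  also have "\<dots> = c ^ Suc (Suc m) * aliased_coeff (chi_poly a (Suc (Suc m))) (dd a (Suc (Suc m))) (j - i)"
    using \<open>a (Suc (Suc m)) > 0\<close> \<open>dd a (Suc m) > 0\<close>
    by (simp add: dd_Suc[of a "Suc m"] field_simps power2_eq_square)
  finally show ?case
    by (simp add: c_def)
qed
end

section \<open>Matrices\<close>

lemma sum_nth_distinct: "distinct xs \<Longrightarrow> (\<Sum>u<length xs. f (xs ! u)) = (\<Sum>p\<in>set xs. f p)"
  by (simp add: bij_betw_nth sum.reindex_bij_betw)

lemma powr_half_squared: "0 < x \<Longrightarrow> (x powr (real n / 2)) ^ 2 = x ^ n"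
  by (simp add: power2_eq_square powr_add[symmetric] powr_realpow)

lemma transpose_mat_diag: "transpose_mat (mat_diag n f) = mat_diag n f"
  by (auto simp: mat_diag_def intro!: eq_matI)

lemma index_transpose_diag_mult:
  fixes C E :: "'a :: comm_semiring_0 mat"
  assumes "C \<in> carrier_mat L L" "E \<in> carrier_mat L L" "r < L" "c < L"
  shows "(transpose_mat C * mat_diag L f * E * C) $$ (r, c)
    = (\<Sum>u<L. \<Sum>v<L. C $$ (u, r) * f u * E $$ (u, v) * C $$ (v, c))"
proof -
  have "(transpose_mat C * mat_diag L f * E) $$ (r, v) = (\<Sum>u<L. C $$ (u, r) * f u * E $$ (u, v))"
    if "v < L" for v
    using assms that by (simp add: mat_diag_mult_right[of _ L L] scalar_prod_def lessThan_atLeast0)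
  then show ?thesis
    using assms
    by (simp add: scalar_prod_def lessThan_atLeast0 sum_distrib_right del: assoc_mult_mat)
      (rule sum.swap)
qed

lemma mat_inv_is_inverse:
  fixes A :: "complex mat"
  assumes A: "A \<in> carrier_mat L L" and "det A \<noteq> 0"
  shows "mat_inv A \<in> carrier_mat L L" "mat_inv A * A = 1\<^sub>m L" "A * mat_inv A = 1\<^sub>m L"
proof -
  obtain B where B: "B \<in> carrier_mat L L" "B * A = 1\<^sub>m L" "A * B = 1\<^sub>m L"
    using det_non_zero_imp_unit[OF assms, of undefined] by (auto simp: Units_def ring_mat_def)
  have "mat_inv A = B"
    unfolding mat_inv_def
  proof (rule the_equality)
    fix B' assume "B' \<in> carrier_mat (dim_row A) (dim_row A) \<and> B' * A = 1\<^sub>m (dim_row A) \<and> A * B' = 1\<^sub>m (dim_row A)"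
    then have "B' \<in> carrier_mat L L" "B' * A = 1\<^sub>m L"
      using A by auto
    then show "B' = B"
      using A B by (metis assoc_mult_mat left_mult_one_mat right_mult_one_mat)
  qed (use A B in simp)
  with B show "mat_inv A \<in> carrier_mat L L" "mat_inv A * A = 1\<^sub>m L" "A * mat_inv A = 1\<^sub>m L"
    by simp_all
qed

lemma invertible_mat_if_det_nonzero:
  fixes A :: "complex mat"
  assumes "A \<in> carrier_mat L L" "det A \<noteq> 0"
  shows "invertible_mat A"
  unfolding invertible_mat_def inverts_mat_def
  using assms mat_inv_is_inverse[OF assms] by auto

lemma conjugate_diag_eq_Serre:
  fixes C E X :: "complex mat"
  assumes C: "C \<in> carrier_mat L L" and E: "E \<in> carrier_mat L L" "transpose_mat E = E"
    and compat: "\<And>u v. u < L \<Longrightarrow> v < L \<Longrightarrow> E $$ (u, v) \<noteq> 0 \<Longrightarrow> f u * g v = f v"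
    and X: "X = transpose_mat C * mat_diag L f * E * C" and "det X \<noteq> 0"
  shows "det C \<noteq> 0" "mat_inv C * mat_diag L g * C = mat_inv X * transpose_mat X"
proof -
  define D where "D = mat_diag L f"
  define G where "G = mat_diag L g"
  have mult_LL [simp]: "A * B \<in> carrier_mat L L"
    if "A \<in> carrier_mat L L" "B \<in> carrier_mat L L" for A B :: "complex mat"
    using that by (rule mult_carrier_mat)
  have assoc_LL [simp]: "A * B * M = A * (B * M)"
    if "A \<in> carrier_mat L L" "B \<in> carrier_mat L L" "M \<in> carrier_mat L L" for A B M :: "complex mat"
    using that by (rule assoc_mult_mat)
  have transpose_LL [simp]: "transpose_mat (A * B) = transpose_mat B * transpose_mat A"
    if "A \<in> carrier_mat L L" "B \<in> carrier_mat L L" for A B :: "complex mat"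
    using that by (rule transpose_mult)
  have [simp]: "D \<in> carrier_mat L L" "G \<in> carrier_mat L L" "transpose_mat D = D"
    by (simp_all add: D_def G_def transpose_mat_diag)
  have "det X = det (transpose_mat C * D * E) * det C"
    unfolding X D_def[symmetric] using C E by (intro det_mult) simp_all
  then show "det C \<noteq> 0"
    using \<open>det X \<noteq> 0\<close> by auto
  note B = mat_inv_is_inverse[OF C this]
  have X_carrier [simp]: "X \<in> carrier_mat L L"
    using C E by (simp add: X D_def[symmetric])
  note Y = mat_inv_is_inverse[OF X_carrier \<open>det X \<noteq> 0\<close>]
  have cancel [simp]: "C * (mat_inv C * M) = M" if "M \<in> carrier_mat L L" for M
    using B C that by (metis assoc_LL left_mult_one_mat)
  have DEG: "D * E * G = E * D"
  proof (rule eq_matI)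
    fix u v assume "u < dim_row (E * D)" "v < dim_col (E * D)"
    then show "(D * E * G) $$ (u, v) = (E * D) $$ (u, v)"
      using E compat[of u v]
      by (simp add: D_def G_def mat_diag_mult_left[of _ L L] mat_diag_mult_right[of _ L L]) blast
  qed (use E in \<open>simp_all add: D_def G_def mat_diag_def\<close>)
  have "E * D * C = D * E * G * C"
    by (simp only: DEG)
  then have "transpose_mat X = X * (mat_inv C * G * C)"
    using C E B by (simp add: X D_def[symmetric])
  moreover have "mat_inv X * (X * M) = M" if "M \<in> carrier_mat L L" for M
    using Y that by (metis X_carrier assoc_LL left_mult_one_mat)
  ultimately show "mat_inv C * mat_diag L g * C = mat_inv X * transpose_mat X"
    using C B by (simp add: G_def)
qed

lemma eta_sym: "eta a n p q = eta a n q p"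
  by (induction a n p q rule: eta.induct) (auto simp: add.commute)

lemma transpose_etaMat: "transpose_mat (etaMat a n) = etaMat a n"
  by (auto simp: etaMat_def eta_sym intro!: eq_matI)

lemma QtMat_eq_mat_diag:
  "QtMat a n s = mat_diag (length (Iset a n)) (\<lambda>u. ee (s * Qt a n (Iset a n ! u)))"
  by (auto simp: QtMat_def mat_diag_def intro!: eq_matI)

context positive_sequence
begin

lemma Qt_Iprime_cancel:
  assumes "1 \<le> n" "p \<in> set (Iprime a n)" "q \<in> set (Iprime a n)" "eta a n p q \<noteq> 0"
  shows "Qt a n p + Qt a n q = 0"
proof -
  obtain k l where p: "p = (n, k)" "k \<in> {1..dd a n}" "\<not> a n dvd k" and q: "q = (n, l)"
    using assms(2,3) by (auto simp: set_Iprime)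
  then have "l = dd a n - k"
    using assms(4) by (auto simp: eta_top[OF assms(1)] split: if_splits)
  then have "Qt a n q = (\<Sum>i\<in>{1..n}. - (omega a n k i - 1/2))"
    unfolding q Qt_top[OF assms(1)] using p by (intro sum.cong refl) (simp add: omega_reflect)
  also have "\<dots> = - Qt a n p"
    unfolding sum_negf p(1) Qt_top[OF assms(1)] ..
  finally show ?thesis
    by simp
qed

lemma Qt_cancel_if_eta:
  assumes "p \<in> set (Iset a n)" "q \<in> set (Iset a n)" "eta a n p q \<noteq> 0"
  shows "Qt a n p + Qt a n q = 0"
  using assms
proof (induction n arbitrary: p q rule: nat_induct_Suc_Suc)
  case 1
  then show ?case
    using Qt_Iprime_cancel[of 1] by simp
next
  case (Suc_Suc m)
  consider "p \<in> set (Iprime a (Suc (Suc m)))" "q \<in> set (Iprime a (Suc (Suc m)))"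
    | "p \<in> set (Iset a m)" "q \<in> set (Iset a m)"
    | "p \<in> set (Iprime a (Suc (Suc m))) \<and> q \<in> set (Iset a m) \<or> p \<in> set (Iset a m) \<and> q \<in> set (Iprime a (Suc (Suc m)))"
    using Suc_Suc.prems(1,2) by auto
  then show ?case
  proof cases
    case 1
    then show ?thesis
      using Qt_Iprime_cancel[of "Suc (Suc m)"] Suc_Suc.prems(3) by simp
  next
    case 2
    then have "fst p \<le> m" "fst q \<le> m"
      using fst_Iset_le by auto
    then show ?thesis
      using Suc_Suc.IH[OF 2] Suc_Suc.prems(3) by (simp add: Qt_Suc_Suc_lower eta_Suc_Suc_lower)
  next
    case 3
    then have "eta a (Suc (Suc m)) p q = 0"
    proof
      assume "p \<in> set (Iprime a (Suc (Suc m))) \<and> q \<in> set (Iset a m)"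
      then show ?thesis
        using fst_Iset_le[of q a m] by (intro eta_Suc_Suc_cross(1)) (auto simp: set_Iprime)
    next
      assume "p \<in> set (Iset a m) \<and> q \<in> set (Iprime a (Suc (Suc m)))"
      then show ?thesis
        using fst_Iset_le[of p a m] by (intro eta_Suc_Suc_cross(2)) (auto simp: set_Iprime)
    qed
    then show ?thesis
      using Suc_Suc.prems(3) by simp
  qed
qed simp

lemma ee_Qt_compatible_eta:
  assumes "u < length (Iset a n)" "v < length (Iset a n)" "etaMat a n $$ (u, v) \<noteq> 0"
  shows "ee (1/2 * Qt a n (Iset a n ! u)) * ee (Qt a n (Iset a n ! v)) = ee (1/2 * Qt a n (Iset a n ! v))"
proof -
  have "Qt a n (Iset a n ! u) + Qt a n (Iset a n ! v) = 0"
    using assms Qt_cancel_if_eta[of "Iset a n ! u" n "Iset a n ! v"] by (simp add: etaMat_def)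
  then have "1/2 * Qt a n (Iset a n ! u) + Qt a n (Iset a n ! v) = 1/2 * Qt a n (Iset a n ! v)"
    by linarith
  then show ?thesis
    by (simp only: ee_add[symmetric])
qed

lemma carrier_mats:
  fixes n :: nat
  defines "L \<equiv> length (Iset a n)"
  shows "nat (mutilde a n) = L" "chMat a n \<in> carrier_mat L L" "etaMat a n \<in> carrier_mat L L"
    "chiMat a n \<in> carrier_mat L L"
  using length_Iset[of n] by (simp_all add: L_def chMat_def etaMat_def chiMat_def flip: length_Iset)

lemma chMat_Euler_form:
  fixes n :: nat
  defines "C \<equiv> complex_of_real (1 / (2 * pi) powr (real n / 2)) \<cdot>\<^sub>m chMat a n"
  shows "transpose_mat C * QtMat a n (1/2) * etaMat a n * C = chiMat a n"
proof (rule eq_matI)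
  define L where "L = length (Iset a n)"
  define I where "I = Iset a n"
  define s where "s = complex_of_real (1 / (2 * pi) powr (real n / 2))"
  note carrier = carrier_mats[of n, folded L_def]
  have C: "C \<in> carrier_mat L L"
    using carrier by (simp add: C_def)
  fix r c assume "r < dim_row (chiMat a n)" "c < dim_col (chiMat a n)"
  then have r: "r < L" and c: "c < L"
    using carrier by auto
  define T where "T p q = chG a n p (int r + 1) * ee (1/2 * Qt a n p) * eta a n p q * chG a n q (int c + 1)"
    for p q
  have C_index: "C $$ (u, r) = s * chG a n (I ! u) (int r + 1)" if "u < L" "r < L" for u r
    using that carrier by (simp add: C_def s_def chMat_def I_def L_def)
  have reindex: "(\<Sum>u<L. g (I ! u)) = (\<Sum>p\<in>set I. g p)" for g :: "nat \<times> nat \<Rightarrow> complex"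
    using sum_nth_distinct[OF distinct_Iset] by (simp add: L_def I_def)
  have "(transpose_mat C * QtMat a n (1/2) * etaMat a n * C) $$ (r, c)
      = (\<Sum>u<L. \<Sum>v<L. s\<^sup>2 * T (I ! u) (I ! v))"
    unfolding QtMat_eq_mat_diag L_def[symmetric] index_transpose_diag_mult[OF C carrier(3) r c]
    using r c by (intro sum.cong refl) (simp add: C_index T_def etaMat_def I_def L_def power2_eq_square mult_ac)
  also have "\<dots> = s\<^sup>2 * ch_pairing a n (set I) (int r + 1) (int c + 1)"
    unfolding sum_distrib_left[symmetric] reindex[of "T _"] reindex[of "\<lambda>p. \<Sum>q\<in>set I. T p q"]
    by (simp add: ch_pairing_def T_def I_def)
  also have "\<dots> = aliased_coeff (chi_poly a n) (dd a n) (int c - int r)"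
  proof -
    have "(1 / (2 * pi) powr (real n / 2)) ^ 2 * (2 * pi) ^ n = 1"
      by (simp add: power_divide powr_half_squared)
    then have "complex_of_real ((1 / (2 * pi) powr (real n / 2)) ^ 2 * (2 * pi) ^ n) = 1"
      by simp
    then have "s\<^sup>2 * (2 * complex_of_real pi) ^ n = 1"
      by (simp add: s_def)
    then show ?thesis
      unfolding I_def ch_pairing_Iset mult.assoc[symmetric] by simp
  qed
  also have "\<dots> = chiMat a n $$ (r, c)"
  proof -
    have "int (degree (chi_poly a n)) + int L \<le> int (dd a n)"
      using degree_chi_poly[of n] length_Iset[of n] by (simp add: L_def)
    then show ?thesis
      using r c carrier coeff_inverse_phi[of "c - r" n]
      by (simp add: aliased_coeff_eq_coeff[where L = L] chiMat_def nat_diff_distrib)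
  qed
  finally show "(transpose_mat C * QtMat a n (1/2) * etaMat a n * C) $$ (r, c) = chiMat a n $$ (r, c)" .
qed (use carrier_mats[of n] in \<open>simp_all add: C_def\<close>)

lemma det_chiMat_nonzero: "det (chiMat a n) \<noteq> 0"
proof -
  have "fps_nth (fps_of_poly (chi_poly a n) * phi a n) 0 = 1"
    using dd_pos[of n] by (simp add: chi_poly_times_phi)
  then have "fps_nth (phi a n) 0 \<noteq> 0"
    by auto
  moreover have "upper_triangular (chiMat a n)"
    unfolding upper_triangular_def chiMat_def by simp
  ultimately show ?thesis
    using carrier_mats[of n]
    by (simp add: det_upper_triangular[of _ "length (Iset a n)"] prod_list_diag_prod chiMat_def)
qed

end

theorem theorem3p4:
  fixes a :: "nat \<Rightarrow> nat" and n :: nat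
  assumes "\<And>i. i \<ge> 1 \<Longrightarrow> a i \<ge> 2"
  defines "C \<equiv> (complex_of_real (1 / (2 * pi) powr (real n / 2))) \<cdot>\<^sub>m chMat a n"
  shows "invertible_mat C
    \<and> mat_inv C * QtMat a n 1 * C = SerreMat a n
    \<and> transpose_mat C * QtMat a n (1/2) * etaMat a n * C = chiMat a n"
proof -
  interpret positive_sequence a
    using assms(1) by unfold_locales fastforce
  note carrier = carrier_mats[of n]
  have C: "C \<in> carrier_mat (length (Iset a n)) (length (Iset a n))"
    using carrier by (simp add: C_def)
  have Euler: "transpose_mat C * QtMat a n (1/2) * etaMat a n * C = chiMat a n"
    unfolding C_def by (rule chMat_Euler_form)
  have Q_half: "QtMat a n (1/2) = mat_diag (length (Iset a n)) (\<lambda>u. ee (1/2 * Qt a n (Iset a n ! u)))"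
    and Q_one: "QtMat a n 1 = mat_diag (length (Iset a n)) (\<lambda>u. ee (Qt a n (Iset a n ! u)))"
    by (simp_all add: QtMat_eq_mat_diag)
  note Serre = conjugate_diag_eq_Serre[OF C carrier(3) transpose_etaMat
      ee_Qt_compatible_eta Euler[unfolded Q_half, symmetric] det_chiMat_nonzero]
  show ?thesis
    using Serre Euler invertible_mat_if_det_nonzero[OF C] unfolding SerreMat_def Q_one by blast
qed

end
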